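(* Let $k>0$ be real, let $M=\begin{bmatrix} k-1 & k-1 & k\\ 1&0&0\\ 0&1&0\end{bmatrix}$ and $N_0=\begin{bmatrix} k-1 & 2k & 2k\\ 2 & 1-k & 2\\ \frac{2}{k} & \frac{2}{k} & -\frac{1}{k}(k^2+k-2)\end{bmatrix}$. For integers $n\ge1$ put $\mathbf{j}_n=N_0M^n$, and define $$\mathbf{j}_{-n}=\begin{bmatrix} j_{-(n-1)} & t_{-(n+1)} & kj_{-n}\\ j_{-n} & t_{-(n+2)} & kj_{-(n+1)}\\ j_{-(n+1)} & t_{-(n+3)} & kj_{-(n+2)}\end{bmatrix},$$ where $t_{-m}=(k-1)j_{-(m-1)}+kj_{-m}$ for every integer $m$. Then for every integer $n\ge1$, $$\mathbf{j}_{-n}=M^{-n}N_0=N_0M^{-n}\qquad\text{and}\qquad \left(\mathbf{j}_n\right)^{-1}=N_0^{-1}\,\mathbf{j}_{-n}\,N_0^{-1}.$$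
   Context: For real $k>0$, the third-order $k$-Jacobsthal--Lucas sequence $(j_n)$ is defined by $j_0=2$, $j_1=k-1$, $j_2=k^2+1$ and $j_{n+3}=(k-1)j_{n+2}+(k-1)j_{n+1}+kj_n$, and extended to negative indices by the backward recurrence $j_{-n}=\frac{1-k}{k}j_{-(n-1)}+\frac{1-k}{k}j_{-(n-2)}+\frac{1}{k}j_{-(n-3)}$ for $n\ge1$. *)

theory Defs
  imports "HOL-Analysis.Analysis"
begin

fun jpos :: "real \<Rightarrow> nat \<Rightarrow> real" where
  "jpos k 0 = 2"
| "jpos k (Suc 0) = k - 1"
| "jpos k (Suc (Suc 0)) = k^2 + 1"
| "jpos k (Suc (Suc (Suc n))) =
     (k - 1) * jpos k (Suc (Suc n)) + (k - 1) * jpos k (Suc n) + k * jpos k n"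

text \<open>jneg k n is the term with index -n, via the backward recurrence.\<close>
fun jneg :: "real \<Rightarrow> nat \<Rightarrow> real" where
  "jneg k 0 = 2"
| "jneg k (Suc 0) =
     (1 - k) / k * jpos k 0 + (1 - k) / k * jpos k 1 + 1 / k * jpos k 2"
| "jneg k (Suc (Suc 0)) =
     (1 - k) / k * jneg k 1 + (1 - k) / k * jpos k 0 + 1 / k * jpos k 1"
| "jneg k (Suc (Suc (Suc n))) =
     (1 - k) / k * jneg k (Suc (Suc n)) + (1 - k) / k * jneg k (Suc n) + 1 / k * jneg k n"

definition jJL :: "real \<Rightarrow> int \<Rightarrow> real" where
  "jJL k i = (if 0 \<le> i then jpos k (nat i) else jneg k (nat (- i)))"

text \<open>tJL k m is the quantity t with index -m.\<close>
definition tJL :: "real \<Rightarrow> int \<Rightarrow> real" where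
  "tJL k m = (k - 1) * jJL k (- (m - 1)) + k * jJL k (- m)"

fun matpow :: "real^'n^'n \<Rightarrow> nat \<Rightarrow> real^'n^'n" where
  "matpow A 0 = mat 1"
| "matpow A (Suc n) = A ** matpow A n"

definition Mmat :: "real \<Rightarrow> real^3^3" where
  "Mmat k = vector [vector [k - 1, k - 1, k], vector [1, 0, 0], vector [0, 1, 0]]"

definition N0mat :: "real \<Rightarrow> real^3^3" where
  "N0mat k = vector [vector [k - 1, 2 * k, 2 * k],
                     vector [2, 1 - k, 2],
                     vector [2 / k, 2 / k, - (1 / k) * (k^2 + k - 2)]]"

definition jposmat :: "real \<Rightarrow> nat \<Rightarrow> real^3^3" where
  "jposmat k n = N0mat k ** matpow (Mmat k) n"

definition jnegmat :: "real \<Rightarrow> nat \<Rightarrow> real^3^3" where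
  "jnegmat k n = (let m = int n in
     vector [vector [jJL k (- (m - 1)), tJL k (m + 1), k * jJL k (- m)],
             vector [jJL k (- m), tJL k (m + 2), k * jJL k (- (m + 1))],
             vector [jJL k (- (m + 1)), tJL k (m + 3), k * jJL k (- (m + 2))]])"

end

theory Submission
  imports Defs
begin

(* For k \<noteq> 0 the companion matrix M has the explicit inverse Minvmat.  The matrix
   bold j with index -n has rows indexed by -(n-1), -n, -(n+1), so left multiplication
   by M^(-1) shifts it to index -(n+1): the first two rows of M^(-1) move rows up, and
   its last row is the backward recurrence producing the new bottom row.  Together with
   the base case (bold j with index -1) = M^(-1) N0 this gives M^(-n) N0.  N0 commutes
   with M^(-1), and N0 is invertible since det N0 = (k+1)^2 (k^2+k+2) / k; hence the
   inverse of N0 M^n is M^(-n) N0^(-1) = N0^(-1) (M^(-n) N0) N0^(-1). *)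

lemma matrix_inv_eqI:
  fixes A B :: "'a::field^'n^'n"
  assumes "A ** B = mat 1"
  shows "matrix_inv A = B"
proof -
  have "B ** A = mat 1"
    using assms matrix_left_right_inverse by blast
  have "A ** matrix_inv A = mat 1 \<and> matrix_inv A ** A = mat 1"
    unfolding matrix_inv_def by (rule someI[of _ B]) (use assms \<open>B ** A = mat 1\<close> in simp)
  then have "matrix_inv A = matrix_inv A ** (A ** B)"
    using assms by (simp add: matrix_mul_rid)
  also have "\<dots> = B"
    using \<open>A ** matrix_inv A = mat 1 \<and> matrix_inv A ** A = mat 1\<close>
    by (simp add: matrix_mul_assoc matrix_mul_lid)
  finally show ?thesis .
qed

lemma invertible_matrix_inv:
  fixes A :: "'a::field^'n^'n"
  assumes "invertible A"
  shows "A ** matrix_inv A = mat 1" "matrix_inv A ** A = mat 1"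
  using assms invertible_right_inverse matrix_inv_eqI matrix_left_right_inverse by metis+

lemma matpow_commute:
  assumes "A ** B = B ** A"
  shows "matpow A n ** B = B ** matpow A n"
proof (induction n)
  case 0
  then show ?case by (simp add: matrix_mul_lid matrix_mul_rid)
next
  case (Suc n)
  have "matpow A (Suc n) ** B = A ** (matpow A n ** B)"
    by (simp add: matrix_mul_assoc)
  also have "\<dots> = (A ** B) ** matpow A n"
    using Suc by (simp add: matrix_mul_assoc)
  finally show ?case
    using assms by (simp add: matrix_mul_assoc)
qed

lemma matpow_Suc_right: "matpow A (Suc n) = matpow A n ** A"
  using matpow_commute[of A A n] by simp

lemma matpow_right_inverse:
  assumes "A ** B = mat 1"
  shows "matpow A n ** matpow B n = mat 1"
proof (induction n)
  case 0
  then show ?case by (simp add: matrix_mul_lid)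
next
  case (Suc n)
  have "matpow A (Suc n) ** matpow B (Suc n) = (matpow A n ** A) ** (B ** matpow B n)"
    by (metis matpow_Suc_right matpow.simps(2))
  also have "\<dots> = matpow A n ** (A ** B) ** matpow B n"
    by (simp add: matrix_mul_assoc)
  finally show ?case
    using assms Suc by (simp add: matrix_mul_rid)
qed

definition Minvmat :: "real \<Rightarrow> real^3^3" where
  "Minvmat k = vector [vector [0, 1, 0], vector [0, 0, 1], vector [1 / k, (1 - k) / k, (1 - k) / k]]"

lemma Mmat_Minvmat: "k \<noteq> 0 \<Longrightarrow> Mmat k ** Minvmat k = mat 1"
  by (simp add: Mmat_def Minvmat_def vec_eq_iff forall_3 matrix_matrix_mult_def sum_3 mat_def
      field_simps)

lemma matrix_inv_Mmat: "k \<noteq> 0 \<Longrightarrow> matrix_inv (Mmat k) = Minvmat k"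
  by (rule matrix_inv_eqI) (rule Mmat_Minvmat)

lemma N0mat_Minvmat_commute: "k \<noteq> 0 \<Longrightarrow> N0mat k ** Minvmat k = Minvmat k ** N0mat k"
  by (simp add: Minvmat_def N0mat_def vec_eq_iff forall_3 matrix_matrix_mult_def sum_3
      field_simps power2_eq_square)

lemma det_N0mat: "k \<noteq> 0 \<Longrightarrow> det (N0mat k) = (k + 1)^2 * (k^2 + k + 2) / k"
  by (simp add: det_3 N0mat_def field_simps power2_eq_square)

lemma invertible_N0mat:
  assumes "k > 0"
  shows "invertible (N0mat k)"
proof -
  have "k^2 + k + 2 > 0"
    using assms by (simp add: add_pos_pos)
  then show ?thesis
    using assms by (simp add: invertible_det_nz det_N0mat)
qed

lemma jJL_nonpos: "i \<le> 0 \<Longrightarrow> jJL k i = jneg k (nat (- i))"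
  by (cases "i = 0") (auto simp: jJL_def)

lemma jnegmat_Suc:
  "jnegmat k (Suc p) =
     vector [vector [jneg k p, (k - 1) * jneg k (p + 1) + k * jneg k (p + 2), k * jneg k (p + 1)],
             vector [jneg k (p + 1), (k - 1) * jneg k (p + 2) + k * jneg k (p + 3), k * jneg k (p + 2)],
             vector [jneg k (p + 2), (k - 1) * jneg k (p + 3) + k * jneg k (p + 4), k * jneg k (p + 3)]]"
  unfolding jnegmat_def Let_def tJL_def
  by (simp add: jJL_nonpos nat_add_distrib)

lemma jnegmat_1: "k \<noteq> 0 \<Longrightarrow> jnegmat k 1 = Minvmat k ** N0mat k"
  unfolding One_nat_def jnegmat_Suc
  by (simp add: Minvmat_def N0mat_def vec_eq_iff forall_3 matrix_matrix_mult_def sum_3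
      numeral_eq_Suc field_simps power2_eq_square)

lemma jnegmat_Suc_Suc: "k \<noteq> 0 \<Longrightarrow> jnegmat k (Suc (Suc p)) = Minvmat k ** jnegmat k (Suc p)"
  unfolding jnegmat_Suc
  by (simp add: Minvmat_def vec_eq_iff forall_3 matrix_matrix_mult_def sum_3 numeral_eq_Suc
      field_simps)

lemma jnegmat_eq_matpow:
  assumes "k \<noteq> 0" and "n \<ge> 1"
  shows "jnegmat k n = matpow (Minvmat k) n ** N0mat k"
proof -
  have "jnegmat k (Suc p) = matpow (Minvmat k) (Suc p) ** N0mat k" for p
  proof (induction p)
    case 0
    then show ?case using jnegmat_1 assms(1) by (simp add: matrix_mul_rid)
  next
    case (Suc p)
    then show ?case using jnegmat_Suc_Suc assms(1) by (simp add: matrix_mul_assoc)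
  qed
  moreover obtain p where "n = Suc p"
    using assms(2) by (cases n) auto
  ultimately show ?thesis
    by blast
qed

theorem mainTheorem11:
  fixes k :: real and n :: nat
  assumes "k > 0" and "n \<ge> 1"
  shows "jnegmat k n = matpow (matrix_inv (Mmat k)) n ** N0mat k
       \<and> jnegmat k n = N0mat k ** matpow (matrix_inv (Mmat k)) n
       \<and> matrix_inv (jposmat k n) = matrix_inv (N0mat k) ** jnegmat k n ** matrix_inv (N0mat k)"
proof -
  have "k \<noteq> 0" using assms(1) by simp
  define N N' P Q where "N = N0mat k" and "N' = matrix_inv (N0mat k)"
    and "P = matpow (Mmat k) n" and "Q = matpow (Minvmat k) n"
  have J: "jnegmat k n = Q ** N"
    using jnegmat_eq_matpow \<open>k \<noteq> 0\<close> assms(2) unfolding Q_def N_def by blast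
  have QN: "Q ** N = N ** Q"
    unfolding Q_def N_def using matpow_commute N0mat_Minvmat_commute[OF \<open>k \<noteq> 0\<close>] by metis
  have NN': "N ** N' = mat 1" "N' ** N = mat 1"
    unfolding N_def N'_def using invertible_matrix_inv invertible_N0mat assms(1) by blast+
  have "(N ** P) ** (Q ** N') = N ** (P ** Q) ** N'"
    by (simp add: matrix_mul_assoc)
  also have "\<dots> = mat 1"
    using matpow_right_inverse[OF Mmat_Minvmat[OF \<open>k \<noteq> 0\<close>]] NN'
    by (simp add: P_def Q_def matrix_mul_rid)
  finally have "matrix_inv (jposmat k n) = Q ** N'"
    unfolding jposmat_def N_def P_def by (rule matrix_inv_eqI)
  also have "\<dots> = N' ** jnegmat k n ** N'"
    using NN'(2) J QN by (metis matrix_mul_assoc matrix_mul_lid)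
  finally show ?thesis
    using J QN matrix_inv_Mmat[OF \<open>k \<noteq> 0\<close>] unfolding N_def N'_def Q_def by simp
qed

end
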